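(* Let $C_1,C_2$ be Archimedean $d$-copulas with strict generators $\phi_1,\phi_2$, respectively. If the function $f=\phi_1\circ\phi_2^{-1}:[0,\infty)\to[0,\infty)$ is subadditive near $\infty$, then $C_1\le_{loc}C_2$.
   Context: A generator is a continuous, strictly decreasing function $\phi:[0,1]\to[0,\infty]$ with $\phi(1)=0$; it is strict if $\lim_{s\searrow0}\phi(s)=\infty$, in which case $\phi$ is a bijection $(0,1]\to[0,\infty)$ with inverse $\phi^{-1}$. A $d$-copula $C$ is Archimedean with strict generator $\phi$ if $C(\boldsymbol u)=\phi^{-1}(\sum_{k=1}^d\phi(u_k))$ (with $C(\boldsymbol u)=0$ if some $u_k=0$). A function $f:[0,\infty)\to[0,\infty)$ is subadditive near $\infty$ if there is $M\ge0$ with $f(x+y)\le f(x)+f(y)$ for all $x,y\in[M,\infty)$. $C_1\le_{loc}C_2$ means there is $\varepsilon>0$ with $C_1(\boldsymbol u)\le C_2(\boldsymbol u)$ for all $\boldsymbol u\in B_\varepsilon(\boldsymbol 0)\cap[0,1]^d$ (Euclidean ball). *)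

theory Defs
  imports "HOL-Analysis.Analysis"
begin

text \<open>Strict generator, represented by its restriction to (0,1]: continuous, strictly
decreasing, phi 1 = 0, and phi s tends to infinity as s tends to 0 from the right
(so phi 0 = infinity in the extended sense). The value at 0 is irrelevant.\<close>
definition strict_generator :: "(real \<Rightarrow> real) \<Rightarrow> bool" where
  "strict_generator \<phi> \<longleftrightarrow>
     continuous_on {0<..1} \<phi> \<and>
     (\<forall>x y. 0 < x \<and> x < y \<and> y \<le> 1 \<longrightarrow> \<phi> y < \<phi> x) \<and>
     \<phi> 1 = 0 \<and>
     filterlim \<phi> at_top (at_right 0)"

definition gen_inv :: "(real \<Rightarrow> real) \<Rightarrow> real \<Rightarrow> real" where
  "gen_inv \<phi> = the_inv_into {0<..1} \<phi>"

definition archimedean :: "(real \<Rightarrow> real) \<Rightarrow> real ^ 'd \<Rightarrow> real" where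
  "archimedean \<phi> u =
     (if \<exists>k. u $ k = 0 then 0 else gen_inv \<phi> (\<Sum>k\<in>UNIV. \<phi> (u $ k)))"

definition unit_cube :: "(real ^ 'd) set" where
  "unit_cube = {u. \<forall>i. 0 \<le> u $ i \<and> u $ i \<le> 1}"

text \<open>d-copula: grounded, uniform margins, d-increasing (nonnegative C-volume of boxes).\<close>
definition is_copula :: "(real ^ 'd \<Rightarrow> real) \<Rightarrow> bool" where
  "is_copula C \<longleftrightarrow>
     (\<forall>u\<in>unit_cube. (\<exists>i. u $ i = 0) \<longrightarrow> C u = 0) \<and>
     (\<forall>u\<in>unit_cube. \<forall>i. (\<forall>j. j \<noteq> i \<longrightarrow> u $ j = 1) \<longrightarrow> C u = u $ i) \<and>
     (\<forall>a\<in>unit_cube. \<forall>b\<in>unit_cube. (\<forall>i. a $ i \<le> b $ i) \<longrightarrow>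
        0 \<le> (\<Sum>S\<in>Pow UNIV. (-1) ^ card S * C (\<chi> i. if i \<in> S then a $ i else b $ i)))"

definition subadditive_near_infinity :: "(real \<Rightarrow> real) \<Rightarrow> bool" where
  "subadditive_near_infinity f \<longleftrightarrow>
     (\<exists>M\<ge>0. \<forall>x y. M \<le> x \<and> M \<le> y \<longrightarrow> f (x + y) \<le> f x + f y)"

definition loc_le :: "(real ^ 'd \<Rightarrow> real) \<Rightarrow> (real ^ 'd \<Rightarrow> real) \<Rightarrow> bool" where
  "loc_le C1 C2 \<longleftrightarrow>
     (\<exists>\<epsilon>>0. \<forall>u\<in>ball 0 \<epsilon> \<inter> unit_cube. C1 u \<le> C2 u)"

end

theory Submission
  imports Defs
begin

text \<open>Near the origin every coordinate u_k is small, so every x_k = \<phi>2 u_k lies beyond the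
threshold M of subadditivity of f = \<phi>1 \<circ> \<phi>2\<inverse>. Then \<phi>1 u_k = f x_k and subadditivity give
f (\<Sum>x_k) \<le> \<Sum>\<phi>1 u_k, i.e. \<phi>1 (C2 u) \<le> \<phi>1 (C1 u); since \<phi>1 is decreasing, C1 u \<le> C2 u.\<close>

lemma strict_generator_less:
  "strict_generator \<phi> \<Longrightarrow> 0 < x \<Longrightarrow> x < y \<Longrightarrow> y \<le> 1 \<Longrightarrow> \<phi> y < \<phi> x"
  unfolding strict_generator_def by blast

lemma strict_generator_inj_on: "strict_generator \<phi> \<Longrightarrow> inj_on \<phi> {0<..1}"
  unfolding inj_on_def
  by (metis strict_generator_less greaterThanAtMost_iff linorder_neq_iff order_less_irrefl)

lemma strict_generator_nonneg: "strict_generator \<phi> \<Longrightarrow> 0 < x \<Longrightarrow> x \<le> 1 \<Longrightarrow> 0 \<le> \<phi> x"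
  using strict_generator_less[of \<phi> x 1] unfolding strict_generator_def
  by (cases "x = 1") auto

lemma strict_generator_eventually_ge:
  assumes "strict_generator \<phi>"
  obtains b where "b > 0" "\<And>x. 0 < x \<Longrightarrow> x < b \<Longrightarrow> M \<le> \<phi> x"
proof -
  have "filterlim \<phi> at_top (at_right 0)"
    using assms unfolding strict_generator_def by blast
  then have "eventually (\<lambda>x. M \<le> \<phi> x) (at_right (0::real))"
    unfolding filterlim_at_top by blast
  then show ?thesis
    using that unfolding eventually_at_right_field by blast
qed

lemma strict_generator_image:
  assumes g: "strict_generator \<phi>" and y: "0 \<le> y"
  shows "y \<in> \<phi> ` {0<..1}"
proof -
  obtain b where b: "b > 0" "\<And>x. 0 < x \<Longrightarrow> x < b \<Longrightarrow> y \<le> \<phi> x"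
    using strict_generator_eventually_ge[OF g] by blast
  define s where "s = min (b/2) 1"
  have s: "0 < s" "s < b" "s \<le> 1"
    using b unfolding s_def by auto
  have "continuous_on {s..1} \<phi>"
    using g s unfolding strict_generator_def
    by (elim conjE continuous_on_subset) auto
  moreover have "\<phi> 1 \<le> y" "y \<le> \<phi> s"
    using g y b(2)[OF s(1,2)] unfolding strict_generator_def by auto
  ultimately obtain x where "s \<le> x" "x \<le> 1" "\<phi> x = y"
    using IVT2'[OF _ _ s(3)] by blast
  then show ?thesis
    using s by force
qed

lemma gen_inv_mem:
  "strict_generator \<phi> \<Longrightarrow> 0 \<le> y \<Longrightarrow> gen_inv \<phi> y \<in> {0<..1}"
  unfolding gen_inv_def
  by (metis strict_generator_image strict_generator_inj_on the_inv_into_into order_refl)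

lemma phi_gen_inv:
  "strict_generator \<phi> \<Longrightarrow> 0 \<le> y \<Longrightarrow> \<phi> (gen_inv \<phi> y) = y"
  unfolding gen_inv_def
  by (metis strict_generator_image strict_generator_inj_on f_the_inv_into_f)

lemma gen_inv_phi:
  "strict_generator \<phi> \<Longrightarrow> x \<in> {0<..1} \<Longrightarrow> gen_inv \<phi> (\<phi> x) = x"
  unfolding gen_inv_def using strict_generator_inj_on the_inv_into_f_f by metis

lemma gen_inv_le_of_phi_le:
  assumes g: "strict_generator \<phi>" and x: "x \<in> {0<..1}" and y: "0 \<le> y" and "\<phi> x \<le> y"
  shows "gen_inv \<phi> y \<le> x"
proof (rule ccontr)
  assume "\<not> gen_inv \<phi> y \<le> x"
  then have "\<phi> (gen_inv \<phi> y) < \<phi> x"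
    using strict_generator_less[OF g] gen_inv_mem[OF g y] x by auto
  with \<open>\<phi> x \<le> y\<close> show False
    using phi_gen_inv[OF g y] by simp
qed

lemma subadditive_sum:
  fixes x :: "'a \<Rightarrow> real" and g :: "real \<Rightarrow> real"
  assumes "M \<ge> 0" and subadd: "\<And>a b. M \<le> a \<Longrightarrow> M \<le> b \<Longrightarrow> g (a + b) \<le> g a + g b"
    and "finite A" "A \<noteq> {}" "\<And>i. i \<in> A \<Longrightarrow> M \<le> x i"
  shows "g (\<Sum>i\<in>A. x i) \<le> (\<Sum>i\<in>A. g (x i))"
  using assms(3-5)
proof (induction A rule: finite_ne_induct)
  case (singleton a)
  then show ?case by simp
next
  case (insert a A)
  obtain b where "b \<in> A"
    using insert by blast
  have "M \<le> x b" using \<open>b \<in> A\<close> insert by blast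
  also have "x b \<le> (\<Sum>i\<in>A. x i)"
    using insert \<open>b \<in> A\<close> \<open>M \<ge> 0\<close> by (intro member_le_sum) (auto intro: order_trans)
  finally have "g (x a + (\<Sum>i\<in>A. x i)) \<le> g (x a) + g (\<Sum>i\<in>A. x i)"
    using insert subadd by auto
  also have "\<dots> \<le> g (x a) + (\<Sum>i\<in>A. g (x i))"
    using insert by simp
  finally show ?case
    using insert by simp
qed

lemma archimedean_pos:
  "(\<And>k. u $ k \<noteq> 0) \<Longrightarrow> archimedean \<phi> u = gen_inv \<phi> (\<Sum>k\<in>UNIV. \<phi> (u $ k))"
  unfolding archimedean_def by simp

lemma archimedean_le_of_subadditive:
  fixes u :: "real ^ 'd"
  assumes g1: "strict_generator \<phi>1" and g2: "strict_generator \<phi>2"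
    and "M \<ge> 0"
    and subadd: "\<And>a b. M \<le> a \<Longrightarrow> M \<le> b \<Longrightarrow>
                   (\<phi>1 \<circ> gen_inv \<phi>2) (a + b) \<le> (\<phi>1 \<circ> gen_inv \<phi>2) a + (\<phi>1 \<circ> gen_inv \<phi>2) b"
    and u: "\<And>k. u $ k \<in> {0<..1}" and large: "\<And>k. M \<le> \<phi>2 (u $ k)"
  shows "archimedean \<phi>1 u \<le> archimedean \<phi>2 u"
proof -
  define f where "f = \<phi>1 \<circ> gen_inv \<phi>2"
  define s where "s = (\<Sum>k\<in>UNIV. \<phi>2 (u $ k))"
  define T where "T = (\<Sum>k\<in>UNIV. \<phi>1 (u $ k))"
  have "0 \<le> s"
    unfolding s_def using large \<open>M \<ge> 0\<close> by (auto intro: sum_nonneg order_trans)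
  have "0 \<le> T"
    unfolding T_def using strict_generator_nonneg[OF g1] u by (auto intro: sum_nonneg)
  have "\<phi>1 (gen_inv \<phi>2 s) = f s"
    unfolding f_def by simp
  also have "\<dots> \<le> (\<Sum>k\<in>UNIV. f (\<phi>2 (u $ k)))"
    unfolding s_def f_def
    using subadditive_sum[OF \<open>M \<ge> 0\<close> subadd, of UNIV "\<lambda>k. \<phi>2 (u $ k)"] large by simp
  also have "\<dots> = T"
    unfolding T_def f_def using gen_inv_phi[OF g2 u] by simp
  finally have "gen_inv \<phi>1 T \<le> gen_inv \<phi>2 s"
    using gen_inv_le_of_phi_le[OF g1 gen_inv_mem[OF g2 \<open>0 \<le> s\<close>] \<open>0 \<le> T\<close>] by blast
  moreover have "\<And>k. u $ k \<noteq> 0"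
    using u by (metis greaterThanAtMost_iff less_irrefl)
  ultimately show ?thesis
    unfolding s_def T_def by (simp add: archimedean_pos)
qed

lemma components_less_of_mem_ball:
  fixes u :: "real ^ 'd"
  assumes "u \<in> ball 0 \<epsilon>" and "\<And>k. 0 \<le> u $ k"
  shows "u $ k < \<epsilon>"
  using assms component_le_norm_cart[of u k] by simp

theorem mainTheorem12:
  fixes \<phi>1 \<phi>2 :: "real \<Rightarrow> real"
    and C1 C2 :: "real ^ 'd \<Rightarrow> real"
  assumes "strict_generator \<phi>1" and "strict_generator \<phi>2"
    and "C1 = archimedean \<phi>1" and "C2 = archimedean \<phi>2"
    and "is_copula C1" and "is_copula C2"
    and "subadditive_near_infinity (\<phi>1 \<circ> gen_inv \<phi>2)"
  shows "loc_le C1 C2"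
proof -
  obtain M where "M \<ge> 0" and subadd: "\<And>a b. M \<le> a \<Longrightarrow> M \<le> b \<Longrightarrow>
      (\<phi>1 \<circ> gen_inv \<phi>2) (a + b) \<le> (\<phi>1 \<circ> gen_inv \<phi>2) a + (\<phi>1 \<circ> gen_inv \<phi>2) b"
    using assms(7) unfolding subadditive_near_infinity_def by blast
  obtain \<epsilon> where "\<epsilon> > 0" and large: "\<And>x. 0 < x \<Longrightarrow> x < \<epsilon> \<Longrightarrow> M \<le> \<phi>2 x"
    using strict_generator_eventually_ge[OF assms(2)] by blast
  have "C1 u \<le> C2 u" if "u \<in> ball 0 \<epsilon> \<inter> unit_cube" for u :: "real ^ 'd"
  proof (cases "\<exists>k. u $ k = 0")
    case True
    then show ?thesis
      using assms(3,4) unfolding archimedean_def by simp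
  next
    case False
    with that have u: "\<And>k. u $ k \<in> {0<..1}"
      unfolding unit_cube_def by (auto simp: less_le)
    with that have "\<And>k. u $ k < \<epsilon>"
      by (intro components_less_of_mem_ball) (auto intro: less_imp_le)
    then have "\<And>k. M \<le> \<phi>2 (u $ k)"
      using u large by simp
    then show ?thesis
      using archimedean_le_of_subadditive[OF assms(1,2) \<open>M \<ge> 0\<close> subadd u] assms(3,4) by simp
  qed
  with \<open>\<epsilon> > 0\<close> show ?thesis
    unfolding loc_le_def by blast
qed

end
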